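(* Let $W$ be a finite Weyl group and $\tilde W=W\ltimes Z$ its affine Weyl group, with elements written $(a,\mathbf u)$, $a\in W$, $\mathbf u\in Z$. Let $X$ be a conjugacy class of involutions of $\tilde W$, and for $x=(a,\mathbf u)\in X$ write $\hat x=a$; let $\hat X$ be the conjugacy class of $\hat x$ in $W$ (this does not depend on the choice of $x\in X$). Suppose $x,y\in X$. If $d(\hat x,\hat y)=k$ in $\mathcal{C}(W,\hat X)$, then $d(x,y)\ge k$ in $\mathcal{C}(\tilde W,X)$. If $\mathcal{C}(W,\hat X)$ is disconnected, then $\mathcal{C}(\tilde W,X)$ is disconnected.
   Context: $W$ is a finite Weyl group with root system $\Phi$ in a Euclidean space $V\cong\mathbb{R}^n$, $\alpha^\vee=2\alpha/\langle\alpha,\alpha\rangle$, and $Z$ is the coroot lattice $L(\Phi^\vee)$ viewed as a group of translations. The affine Weyl group $\tilde W$ is the semidirect product of $W$ and $Z$, with elements $(a,\mathbf u)$ and multiplication $(a,\mathbf u)(b,\mathbf v)=(ab,\mathbf u^b+\mathbf v)$, where $\mathbf u\mapsto\mathbf u^b$ denotes the (right) linear action of $W$ on $V$. For a group $G$ and a set $X$ of involutions, $\mathcal{C}(G,X)$ is the graph on $X$ with $x,y$ adjacent iff they commute, and $d(x,y)$ denotes graph distance. *)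

theory Defs
  imports "HOL-Analysis.Analysis" "HOL-Library.Extended_Nat"
begin

definition coroot :: "'a::euclidean_space \<Rightarrow> 'a" where
  "coroot \<alpha> = (2 / (\<alpha> \<bullet> \<alpha>)) *\<^sub>R \<alpha>"

definition refl :: "'a::euclidean_space \<Rightarrow> 'a \<Rightarrow> 'a" where
  "refl \<alpha> v = v - (v \<bullet> coroot \<alpha>) *\<^sub>R \<alpha>"

definition root_system :: "'a::euclidean_space set \<Rightarrow> bool" where
  "root_system \<Phi> \<longleftrightarrow>
     finite \<Phi> \<and> 0 \<notin> \<Phi> \<and> span \<Phi> = UNIV \<and>
     (\<forall>\<alpha>\<in>\<Phi>. refl \<alpha> ` \<Phi> \<subseteq> \<Phi>) \<and>
     (\<forall>\<alpha>\<in>\<Phi>. \<forall>\<beta>\<in>\<Phi>. \<beta> \<bullet> coroot \<alpha> \<in> \<int>) \<and>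
     (\<forall>\<alpha>\<in>\<Phi>. \<forall>c::real. c *\<^sub>R \<alpha> \<in> \<Phi> \<longrightarrow> c = 1 \<or> c = -1)"

text \<open>Elements of W are linear maps of V, acting on the right: u^b = b u.
  Hence the product ab (first a, then b) is the function b o a.\<close>

definition weyl :: "'a::euclidean_space set \<Rightarrow> ('a \<Rightarrow> 'a) set" where
  "weyl \<Phi> = {foldr (\<circ>) (map refl rs) id | rs. set rs \<subseteq> \<Phi>}"

definition weyl_mult :: "('a \<Rightarrow> 'a) \<Rightarrow> ('a \<Rightarrow> 'a) \<Rightarrow> ('a \<Rightarrow> 'a)" where
  "weyl_mult a b = b \<circ> a"

definition coroot_lattice :: "'a::euclidean_space set \<Rightarrow> 'a set" where
  "coroot_lattice \<Phi> = {(\<Sum>\<alpha>\<in>\<Phi>. of_int (c \<alpha>) *\<^sub>R coroot \<alpha>) | c. True}"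

definition aff_weyl :: "'a::euclidean_space set \<Rightarrow> (('a \<Rightarrow> 'a) \<times> 'a) set" where
  "aff_weyl \<Phi> = weyl \<Phi> \<times> coroot_lattice \<Phi>"

definition aff_mult :: "(('a::real_vector \<Rightarrow> 'a) \<times> 'a) \<Rightarrow> (('a \<Rightarrow> 'a) \<times> 'a) \<Rightarrow> (('a \<Rightarrow> 'a) \<times> 'a)" where
  "aff_mult x y = (weyl_mult (fst x) (fst y), fst y (snd x) + snd y)"

definition aff_one :: "('a \<Rightarrow> 'a) \<times> 'a::real_vector" where
  "aff_one = (id, 0)"

definition involution :: "'g set \<Rightarrow> ('g \<Rightarrow> 'g \<Rightarrow> 'g) \<Rightarrow> 'g \<Rightarrow> 'g \<Rightarrow> bool" where
  "involution G mul e x \<longleftrightarrow> x \<in> G \<and> x \<noteq> e \<and> mul x x = e"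

text \<open>Conjugacy class of x in G: all g x g^{-1}, written without inverses
  as the z with g x = z g.\<close>
definition conj_class :: "'g set \<Rightarrow> ('g \<Rightarrow> 'g \<Rightarrow> 'g) \<Rightarrow> 'g \<Rightarrow> 'g set" where
  "conj_class G mul x = {z \<in> G. \<exists>g\<in>G. mul g x = mul z g}"

definition cg_adj :: "('g \<Rightarrow> 'g \<Rightarrow> 'g) \<Rightarrow> 'g set \<Rightarrow> 'g \<Rightarrow> 'g \<Rightarrow> bool" where
  "cg_adj mul X x y \<longleftrightarrow> x \<in> X \<and> y \<in> X \<and> x \<noteq> y \<and> mul x y = mul y x"

definition cg_path :: "('g \<Rightarrow> 'g \<Rightarrow> 'g) \<Rightarrow> 'g set \<Rightarrow> 'g \<Rightarrow> 'g \<Rightarrow> nat \<Rightarrow> bool" where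
  "cg_path mul X x y k \<longleftrightarrow>
     (\<exists>p::nat \<Rightarrow> 'g. p 0 = x \<and> p k = y \<and> (\<forall>i\<le>k. p i \<in> X) \<and>
        (\<forall>i<k. cg_adj mul X (p i) (p (Suc i))))"

definition cg_dist :: "('g \<Rightarrow> 'g \<Rightarrow> 'g) \<Rightarrow> 'g set \<Rightarrow> 'g \<Rightarrow> 'g \<Rightarrow> enat" where
  "cg_dist mul X x y =
     (if \<exists>k. cg_path mul X x y k then enat (LEAST k. cg_path mul X x y k) else \<infinity>)"

definition cg_connected :: "('g \<Rightarrow> 'g \<Rightarrow> 'g) \<Rightarrow> 'g set \<Rightarrow> bool" where
  "cg_connected mul X \<longleftrightarrow> (\<forall>x\<in>X. \<forall>y\<in>X. cg_dist mul X x y \<noteq> \<infinity>)"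

end

theory Submission
  imports Defs
begin

text \<open>The projection \<open>(a, u) \<mapsto> a\<close> of the affine Weyl group onto \<open>W\<close> is a homomorphism, so
  it maps \<open>X\<close> into the class of \<open>fst x\<^sub>0\<close> and commuting elements to commuting (possibly equal)
  ones; hence a path from \<open>x\<close> to \<open>y\<close> projects to a path from \<open>fst x\<close> to \<open>fst y\<close> that is no
  longer. It is also onto that class: writing \<open>x\<^sub>0 = (b, u\<^sub>0)\<close>, if \<open>g b = a g\<close> in \<open>W\<close> then
  \<open>(g, 0) x\<^sub>0 = (a, w) (g, 0)\<close> for the lattice point \<open>w\<close> with \<open>g w = u\<^sub>0\<close>, which exists because
  \<open>W\<close> permutes the coroot lattice. So connectedness passes from the affine graph to the finite one.\<close>

lemma cg_path_0_iff: "cg_path mul X x y 0 \<longleftrightarrow> x = y \<and> x \<in> X"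
  unfolding cg_path_def by auto

lemma cg_path_snoc:
  assumes "cg_path mul X x y k" and "cg_adj mul X y z"
  shows "cg_path mul X x z (Suc k)"
proof -
  obtain p where p: "p 0 = x" "p k = y" "\<forall>i\<le>k. p i \<in> X" "\<forall>i<k. cg_adj mul X (p i) (p (Suc i))"
    using assms(1) unfolding cg_path_def by blast
  have "z \<in> X" using assms(2) unfolding cg_adj_def by blast
  then show ?thesis
    unfolding cg_path_def using p assms(2)
    by (intro exI[of _ "p(Suc k := z)"]) (auto simp: le_Suc_eq less_Suc_eq)
qed

lemma cg_path_SucE:
  assumes "cg_path mul X x z (Suc k)"
  obtains y where "cg_path mul X x y k" and "cg_adj mul X y z"
proof -
  obtain p where p: "p 0 = x" "p (Suc k) = z" "\<forall>i\<le>Suc k. p i \<in> X"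
    "\<forall>i<Suc k. cg_adj mul X (p i) (p (Suc i))"
    using assms unfolding cg_path_def by blast
  have "cg_path mul X x (p k) k"
    unfolding cg_path_def using p by (intro exI[of _ p]) auto
  moreover have "cg_adj mul X (p k) z" using p by auto
  ultimately show thesis by (rule that)
qed

lemma cg_dist_le_path: "cg_path mul X x y k \<Longrightarrow> cg_dist mul X x y \<le> enat k"
  unfolding cg_dist_def by (auto intro: Least_le)

lemma cg_path_cg_dist: "cg_dist mul X x y = enat k \<Longrightarrow> cg_path mul X x y k"
  unfolding cg_dist_def by (auto split: if_splits intro: LeastI_ex)

text \<open>Consecutive vertices of the image walk may coincide; dropping the repetitions can only
  shorten it.\<close>

lemma cg_path_image:
  assumes maps: "f ` X \<subseteq> Y"
    and commute: "\<And>u v. u \<in> X \<Longrightarrow> v \<in> X \<Longrightarrow> mul u v = mul v u \<Longrightarrow>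
                    mul' (f u) (f v) = mul' (f v) (f u)"
    and "cg_path mul X x y m"
  shows "\<exists>j\<le>m. cg_path mul' Y (f x) (f y) j"
  using assms(3)
proof (induction m arbitrary: y)
  case 0
  then show ?case using maps by (auto simp: cg_path_0_iff)
next
  case (Suc m)
  then obtain z where path: "cg_path mul X x z m" and adj: "cg_adj mul X z y"
    by (elim cg_path_SucE)
  obtain j where "j \<le> m" and path': "cg_path mul' Y (f x) (f z) j"
    using Suc.IH[OF path] by blast
  show ?case
  proof (cases "f z = f y")
    case True
    then show ?thesis using \<open>j \<le> m\<close> path' by (metis le_SucI)
  next
    case False
    with adj maps commute have "cg_adj mul' Y (f z) (f y)"
      unfolding cg_adj_def by auto
    with path' have "cg_path mul' Y (f x) (f y) (Suc j)" by (rule cg_path_snoc)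
    then show ?thesis using \<open>j \<le> m\<close> by auto
  qed
qed

lemma cg_dist_image_le:
  assumes "f ` X \<subseteq> Y"
    and "\<And>u v. u \<in> X \<Longrightarrow> v \<in> X \<Longrightarrow> mul u v = mul v u \<Longrightarrow>
           mul' (f u) (f v) = mul' (f v) (f u)"
  shows "cg_dist mul' Y (f x) (f y) \<le> cg_dist mul X x y"
proof (cases "cg_dist mul X x y")
  case (enat m)
  then have "cg_path mul X x y m" by (rule cg_path_cg_dist)
  then obtain j where "j \<le> m" and "cg_path mul' Y (f x) (f y) j"
    using cg_path_image[of f X Y mul mul', OF assms] by blast
  then have "cg_dist mul' Y (f x) (f y) \<le> enat j" by (intro cg_dist_le_path)
  also have "\<dots> \<le> cg_dist mul X x y" using \<open>j \<le> m\<close> enat by simp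
  finally show ?thesis .
qed simp

lemma cg_connected_image:
  assumes "f ` X = Y"
    and "\<And>u v. u \<in> X \<Longrightarrow> v \<in> X \<Longrightarrow> mul u v = mul v u \<Longrightarrow>
           mul' (f u) (f v) = mul' (f v) (f u)"
    and "cg_connected mul X"
  shows "cg_connected mul' Y"
  unfolding cg_connected_def
proof (intro ballI)
  fix a b assume "a \<in> Y" "b \<in> Y"
  then obtain x y where "x \<in> X" "y \<in> X" "a = f x" "b = f y" using assms(1) by blast
  then have "cg_dist mul X x y \<noteq> \<infinity>" using assms(3) unfolding cg_connected_def by blast
  moreover have "cg_dist mul' Y a b \<le> cg_dist mul X x y"
    unfolding \<open>a = f x\<close> \<open>b = f y\<close> using assms(1,2) by (intro cg_dist_image_le) auto
  ultimately show "cg_dist mul' Y a b \<noteq> \<infinity>" by (metis enat_ord_simps(5))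
qed

lemma conj_class_hom_image:
  assumes "f ` G \<subseteq> G'" and "x \<in> G"
    and "\<And>u v. u \<in> G \<Longrightarrow> v \<in> G \<Longrightarrow> f (mul u v) = mul' (f u) (f v)"
    and "z \<in> conj_class G mul x"
  shows "f z \<in> conj_class G' mul' (f x)"
proof -
  obtain g where "z \<in> G" "g \<in> G" "mul g x = mul z g"
    using assms(4) unfolding conj_class_def by blast
  then have "mul' (f g) (f x) = mul' (f z) (f g)" using assms(2,3) by metis
  then show ?thesis unfolding conj_class_def using \<open>z \<in> G\<close> \<open>g \<in> G\<close> assms(1) by blast
qed

lemma linear_refl: "linear (refl \<alpha>)"
  by (rule linearI) (simp_all add: refl_def algebra_simps)

lemma inner_coroot_self: "\<alpha> \<noteq> 0 \<Longrightarrow> \<alpha> \<bullet> coroot \<alpha> = 2"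
  unfolding coroot_def by simp

lemma refl_refl: "\<alpha> \<noteq> 0 \<Longrightarrow> refl \<alpha> (refl \<alpha> v) = v"
  unfolding refl_def by (simp add: inner_coroot_self algebra_simps)

lemma inner_refl_refl: "\<alpha> \<noteq> 0 \<Longrightarrow> refl \<alpha> u \<bullet> refl \<alpha> v = u \<bullet> v"
  unfolding refl_def coroot_def
  by (simp add: inner_diff_left inner_diff_right inner_commute field_simps)

lemma refl_coroot: "\<alpha> \<noteq> 0 \<Longrightarrow> refl \<alpha> (coroot \<beta>) = coroot (refl \<alpha> \<beta>)"
  unfolding coroot_def by (simp add: linear_scale[OF linear_refl] inner_refl_refl)

lemma zero_in_coroot_lattice: "0 \<in> coroot_lattice \<Phi>"
  unfolding coroot_lattice_def by (auto intro!: exI[of _ "\<lambda>_. 0"])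

text \<open>Since \<open>refl \<alpha>\<close> permutes \<open>\<Phi>\<close>, it permutes the generators \<open>coroot \<beta>\<close> of the lattice.\<close>

lemma refl_in_coroot_lattice:
  assumes "root_system \<Phi>" and "\<alpha> \<in> \<Phi>" and "v \<in> coroot_lattice \<Phi>"
  shows "refl \<alpha> v \<in> coroot_lattice \<Phi>"
proof -
  have "finite \<Phi>" and "\<alpha> \<noteq> 0" and "refl \<alpha> ` \<Phi> \<subseteq> \<Phi>"
    using assms(1,2) unfolding root_system_def by auto
  then have "inj_on (refl \<alpha>) \<Phi>" by (metis inj_on_inverseI refl_refl)
  with \<open>refl \<alpha> ` \<Phi> \<subseteq> \<Phi>\<close> \<open>finite \<Phi>\<close> have bij: "bij_betw (refl \<alpha>) \<Phi> \<Phi>"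
    by (simp add: bij_betw_def endo_inj_surj)
  obtain c where c: "v = (\<Sum>\<beta>\<in>\<Phi>. of_int (c \<beta>) *\<^sub>R coroot \<beta>)"
    using assms(3) unfolding coroot_lattice_def by auto
  have "refl \<alpha> v = (\<Sum>\<beta>\<in>\<Phi>. of_int (c \<beta>) *\<^sub>R coroot (refl \<alpha> \<beta>))"
    unfolding c by (simp add: linear_sum[OF linear_refl] linear_scale[OF linear_refl]
        refl_coroot[OF \<open>\<alpha> \<noteq> 0\<close>])
  also have "\<dots> = (\<Sum>\<gamma>\<in>\<Phi>. of_int (c (refl \<alpha> \<gamma>)) *\<^sub>R coroot \<gamma>)"
    using sum.reindex_bij_betw[OF bij, of "\<lambda>\<gamma>. of_int (c (refl \<alpha> \<gamma>)) *\<^sub>R coroot \<gamma>"]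
    by (simp add: refl_refl[OF \<open>\<alpha> \<noteq> 0\<close>])
  finally show ?thesis
    unfolding coroot_lattice_def by (intro CollectI exI[of _ "\<lambda>\<gamma>. c (refl \<alpha> \<gamma>)"]) simp
qed

lemma refl_image_coroot_lattice:
  assumes "root_system \<Phi>" and "\<alpha> \<in> \<Phi>"
  shows "refl \<alpha> ` coroot_lattice \<Phi> = coroot_lattice \<Phi>"
proof -
  have "\<alpha> \<noteq> 0" using assms unfolding root_system_def by auto
  have "v \<in> refl \<alpha> ` coroot_lattice \<Phi>" if "v \<in> coroot_lattice \<Phi>" for v
    using refl_refl[OF \<open>\<alpha> \<noteq> 0\<close>, of v] refl_in_coroot_lattice[OF assms that] by (metis imageI)
  then show ?thesis using refl_in_coroot_lattice[OF assms] by blast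
qed

lemma weyl_induct [consumes 1, case_names id refl]:
  assumes "a \<in> weyl \<Phi>"
    and "P id"
    and "\<And>\<alpha> a. \<alpha> \<in> \<Phi> \<Longrightarrow> P a \<Longrightarrow> P (refl \<alpha> \<circ> a)"
  shows "P a"
proof -
  obtain rs where "set rs \<subseteq> \<Phi>" and a: "a = foldr (\<circ>) (map refl rs) id"
    using assms(1) unfolding weyl_def by blast
  then show ?thesis using assms(2,3) by (induction rs arbitrary: a) auto
qed

lemma linear_weyl: "a \<in> weyl \<Phi> \<Longrightarrow> linear a"
  by (erule weyl_induct) (metis linear_id, metis linear_compose linear_refl)

lemma weyl_image_coroot_lattice:
  assumes "root_system \<Phi>" and "a \<in> weyl \<Phi>"
  shows "a ` coroot_lattice \<Phi> = coroot_lattice \<Phi>"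
  using assms(2)
proof (induction rule: weyl_induct)
  case (refl \<alpha> a)
  then show ?case by (simp only: image_comp[symmetric] refl_image_coroot_lattice[OF assms(1)])
qed simp

lemma fst_aff_mult [simp]: "fst (aff_mult x y) = weyl_mult (fst x) (fst y)"
  by (simp add: aff_mult_def)

lemma fst_image_aff_conj_class:
  assumes "root_system \<Phi>" and "x0 \<in> aff_weyl \<Phi>"
  shows "fst ` conj_class (aff_weyl \<Phi>) aff_mult x0 = conj_class (weyl \<Phi>) weyl_mult (fst x0)"
proof
  have fst_aff_weyl: "fst ` aff_weyl \<Phi> \<subseteq> weyl \<Phi>" by (auto simp: aff_weyl_def)
  have "fst z \<in> conj_class (weyl \<Phi>) weyl_mult (fst x0)"
    if "z \<in> conj_class (aff_weyl \<Phi>) aff_mult x0" for z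
    using conj_class_hom_image[OF fst_aff_weyl assms(2) _ that] by simp
  then show "fst ` conj_class (aff_weyl \<Phi>) aff_mult x0 \<subseteq> conj_class (weyl \<Phi>) weyl_mult (fst x0)"
    by blast
next
  show "conj_class (weyl \<Phi>) weyl_mult (fst x0) \<subseteq> fst ` conj_class (aff_weyl \<Phi>) aff_mult x0"
  proof
    fix a assume "a \<in> conj_class (weyl \<Phi>) weyl_mult (fst x0)"
    then obtain g where "a \<in> weyl \<Phi>" "g \<in> weyl \<Phi>" and conj: "weyl_mult g (fst x0) = weyl_mult a g"
      unfolding conj_class_def by blast
    have "fst x0 \<in> weyl \<Phi>" and "snd x0 \<in> coroot_lattice \<Phi>"
      using assms(2) unfolding aff_weyl_def by auto
    then have "snd x0 \<in> g ` coroot_lattice \<Phi>"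
      by (simp add: weyl_image_coroot_lattice[OF assms(1) \<open>g \<in> weyl \<Phi>\<close>])
    then obtain w where w: "w \<in> coroot_lattice \<Phi>" "g w = snd x0" by (auto simp: image_iff)
    have "fst x0 0 = 0" using linear_weyl[OF \<open>fst x0 \<in> weyl \<Phi>\<close>] by (rule linear_0)
    then have "aff_mult (g, 0) x0 = aff_mult (a, w) (g, 0)"
      using conj w(2) by (simp add: aff_mult_def)
    moreover have "(a, w) \<in> aff_weyl \<Phi>" "(g, 0) \<in> aff_weyl \<Phi>"
      using \<open>a \<in> weyl \<Phi>\<close> \<open>g \<in> weyl \<Phi>\<close> w(1) zero_in_coroot_lattice by (auto simp: aff_weyl_def)
    ultimately have "(a, w) \<in> conj_class (aff_weyl \<Phi>) aff_mult x0"
      unfolding conj_class_def by (intro CollectI conjI bexI[of _ "(g, 0)"])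
    then show "a \<in> fst ` conj_class (aff_weyl \<Phi>) aff_mult x0" by force
  qed
qed

theorem lemma2p1:
  fixes \<Phi> :: "'a::euclidean_space set"
    and x0 x y :: "('a \<Rightarrow> 'a) \<times> 'a"
  assumes "root_system \<Phi>"
    and "involution (aff_weyl \<Phi>) aff_mult aff_one x0"
    and "X = conj_class (aff_weyl \<Phi>) aff_mult x0"
    and "Xh = conj_class (weyl \<Phi>) weyl_mult (fst x0)"
    and "x \<in> X" and "y \<in> X"
  shows "(\<forall>k::nat. cg_dist weyl_mult Xh (fst x) (fst y) = enat k
                  \<longrightarrow> cg_dist aff_mult X x y \<ge> enat k)
         \<and> (\<not> cg_connected weyl_mult Xh \<longrightarrow> \<not> cg_connected aff_mult X)"
proof -
  have "x0 \<in> aff_weyl \<Phi>" using assms(2) unfolding involution_def by blast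
  then have onto: "fst ` X = Xh"
    unfolding assms(3,4) by (rule fst_image_aff_conj_class[OF assms(1)])
  have commute: "weyl_mult (fst u) (fst v) = weyl_mult (fst v) (fst u)"
    if "aff_mult u v = aff_mult v u" for u v :: "('a \<Rightarrow> 'a) \<times> 'a"
    using arg_cong[OF that, of fst] by simp
  have "cg_dist weyl_mult Xh (fst x) (fst y) \<le> cg_dist aff_mult X x y"
    using cg_dist_image_le[of fst X Xh] onto commute by blast
  moreover have "cg_connected weyl_mult Xh" if "cg_connected aff_mult X"
    using cg_connected_image[OF onto _ that] commute by blast
  ultimately show ?thesis by auto
qed

end
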